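(* Let $0<p\leqslant q:=1-p$, and let $\tilde f(z)$ and $\tilde g(z)$ be entire functions satisfying \[ \tilde{f}(z)=(1-e^{-pz})\tilde{f}(pz) +e^{-pz}\tilde{f}(qz) +\tilde{g}(z), \] with $\tilde f(0)=\tilde g(0)=0$. If $\tilde g(x)=O(x^\alpha(\log_+x)^\beta)$ for real $x\to\infty$, where $\alpha,\beta\in\mathbb{R}$ and $\log_+x:=\log(1+x)$, then, as $x\to\infty$ along the reals, \[ \tilde{f}(x) = \begin{cases} O(x^{\alpha}(\log_+x)^\beta), & \text{if }\alpha>0;\\ O((\log_+x)^{\beta+1}), & \text{if }\alpha=0,\ \beta>-1;\\ O(\log_+ \log_+ x), & \text{if }\alpha=0,\ \beta=-1;\\ O(1), &\text{if }\alpha=0,\ \beta<-1;\\ O(1), &\text{if } \alpha<0. \end{cases} \] *)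

theory Defs
  imports "HOL-Analysis.Analysis" "HOL-Library.Landau_Symbols"
begin

definition logp :: "real \<Rightarrow> real" where
  "logp x = ln (1 + x)"

end

theory Submission
  imports Defs "HOL-Real_Asymp.Real_Asymp"
begin

(* On the positive real axis exp(-p y) lies in (0, 1], so the functional equation makes f y a
   convex combination of f (p y) and f (q y) plus g y, whence
   |f y| <= max |f (p y)| |f (q y)| + |g y|.  Since p <= q < 1, iterating pushes the argument down
   geometrically: cutting (x0, oo) into the blocks (x0 q^-(k-1), x0 q^-k], |f| on the n-th block is
   at most max |f| on [0, x0] plus the sum over k <= n of max |g| on block k.  That maximum is
   O(q^(-alpha k) k^beta) and n is about log_(1/q) x, so the five cases are the five growth regimes
   of the partial sums of q^(-alpha k) k^beta; each is bounded by comparison with a telescoping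
   sum whose increments dominate the terms. *)

lemma norm_scaleR_convex_add_le:
  fixes a b c :: "'a::real_normed_vector"
  assumes "0 \<le> w" "w \<le> 1"
  shows "norm ((1 - w) *\<^sub>R a + w *\<^sub>R b + c) \<le> max (norm a) (norm b) + norm c"
proof -
  have "norm ((1 - w) *\<^sub>R a + w *\<^sub>R b + c) \<le> norm ((1 - w) *\<^sub>R a) + norm (w *\<^sub>R b) + norm c"
    using norm_triangle_ineq[of "(1 - w) *\<^sub>R a + w *\<^sub>R b" c]
      norm_triangle_ineq[of "(1 - w) *\<^sub>R a" "w *\<^sub>R b"] by linarith
  also have "\<dots> = (1 - w) * norm a + w * norm b + norm c"
    using assms by simp
  also have "\<dots> \<le> (1 - w) * max (norm a) (norm b) + w * max (norm a) (norm b) + norm c"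
    using assms by (intro add_mono mult_left_mono) auto
  finally show ?thesis
    by (simp add: algebra_simps)
qed

lemma norm_le_max_dilations_add:
  fixes f g :: "complex \<Rightarrow> complex" and p q y :: real
  assumes feq: "\<And>z. f z = (1 - exp (- (of_real p * z))) * f (of_real p * z)
                      + exp (- (of_real p * z)) * f (of_real q * z) + g z"
    and "0 \<le> p" "0 \<le> y"
  shows "norm (f y) \<le> max (norm (f (p * y))) (norm (f (q * y))) + norm (g y)"
proof -
  define w where "w = exp (- (p * y))"
  have "exp (- (of_real p * of_real y)) = (of_real w :: complex)"
    by (simp add: w_def flip: exp_of_real)
  then have "f y = (1 - w) *\<^sub>R f (p * y) + w *\<^sub>R f (q * y) + g y"
    using feq[of "of_real y"] by (simp add: scaleR_conv_of_real)
  moreover have "0 \<le> w" "w \<le> 1"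
    using assms by (simp_all add: w_def)
  ultimately show ?thesis
    using norm_scaleR_convex_add_le by metis
qed

lemma max_recurrence_le_block_sum:
  fixes F G :: "real \<Rightarrow> real" and a :: "nat \<Rightarrow> real"
  assumes rec: "\<And>y. 0 \<le> y \<Longrightarrow> F y \<le> max (F (p * y)) (F (q * y)) + G y"
    and pq: "0 \<le> p" "p \<le> q" "q * r \<le> 1" and "0 \<le> r" "0 \<le> x0"
    and base: "\<And>y. 0 \<le> y \<Longrightarrow> y \<le> x0 \<Longrightarrow> F y \<le> B"
    and block: "\<And>k y. x0 * r ^ k < y \<Longrightarrow> y \<le> x0 * r ^ Suc k \<Longrightarrow> G y \<le> a (Suc k)"
    and a: "\<And>k. 0 \<le> a k"
  shows "0 \<le> y \<Longrightarrow> y \<le> x0 * r ^ n \<Longrightarrow> F y \<le> B + (\<Sum>k=1..n. a k)"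
proof (induction n arbitrary: y)
  case 0
  then show ?case
    using base by simp
next
  case (Suc n)
  show ?case
  proof (cases "y \<le> x0 * r ^ n")
    case True
    then show ?thesis
      using Suc.IH[OF Suc.prems(1)] a[of "Suc n"] by simp
  next
    case False
    have "q * y \<le> q * (x0 * r ^ Suc n)"
      using Suc.prems pq by (intro mult_left_mono) auto
    also have "\<dots> = (q * r) * (x0 * r ^ n)"
      by simp
    also have "\<dots> \<le> x0 * r ^ n"
      using pq \<open>0 \<le> r\<close> \<open>0 \<le> x0\<close> by (intro mult_left_le_one_le) auto
    finally have qy: "q * y \<le> x0 * r ^ n" .
    moreover have "p * y \<le> q * y"
      using pq Suc.prems by (intro mult_right_mono) auto
    ultimately have "max (F (p * y)) (F (q * y)) \<le> B + (\<Sum>k=1..n. a k)"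
      using Suc.IH pq Suc.prems by simp
    moreover have "G y \<le> a (Suc n)"
      using block False Suc.prems by simp
    ultimately show ?thesis
      using rec[OF Suc.prems(1)] by (simp add: max_def split: if_split_asm)
  qed
qed

lemma powr_le_powr_abs_mult:
  fixes y a c \<gamma> :: real
  assumes "0 < y" "y \<le> a" "a \<le> c * y"
  shows "y powr \<gamma> \<le> c powr \<bar>\<gamma>\<bar> * a powr \<gamma>"
proof (cases "0 \<le> \<gamma>")
  case True
  have "1 * y \<le> c * y"
    using assms by linarith
  then have "1 \<le> c"
    using assms(1) by (rule mult_right_le_imp_le)
  then have "1 * a powr \<gamma> \<le> c powr \<bar>\<gamma>\<bar> * a powr \<gamma>"
    by (intro mult_right_mono ge_one_powr_ge_zero) auto
  moreover have "y powr \<gamma> \<le> a powr \<gamma>"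
    using assms True by (intro powr_mono2) auto
  ultimately show ?thesis
    by simp
next
  case False
  have "0 < c * y"
    using assms by linarith
  then have "0 < c"
    using assms(1) by (simp add: zero_less_mult_iff)
  have "y powr \<gamma> \<le> (a / c) powr \<gamma>"
    using assms False \<open>0 < c\<close> by (intro powr_mono2') (auto simp: field_simps)
  also have "\<dots> = c powr \<bar>\<gamma>\<bar> * a powr \<gamma>"
    using False by (subst powr_divide) (simp add: powr_minus divide_inverse mult.commute)
  finally show ?thesis .
qed

lemma ln_one_plus_block_bounds:
  fixes r x0 y :: real
  assumes r: "1 < r" "r \<le> x0" and y: "x0 * r ^ k < y" "y \<le> x0 * r ^ Suc k"
  shows "Suc k * ln r \<le> ln (1 + y)" "ln (1 + y) \<le> Suc k * ln ((1 + x0) * r)"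
proof -
  have "0 < x0 * r ^ k"
    using r by simp
  then have "0 < y"
    using y by linarith
  have "Suc k * ln r = ln r + k * ln r"
    by (simp add: algebra_simps)
  also have "\<dots> \<le> ln (x0 * r ^ k)"
    using r by (simp add: ln_mult ln_realpow)
  also have "\<dots> \<le> ln (1 + y)"
    using y \<open>0 < x0 * r ^ k\<close> by simp
  finally show "Suc k * ln r \<le> ln (1 + y)" .
  have "1 + y \<le> (1 + x0) * r ^ Suc k"
    using y r one_le_power[of r "Suc k"] by (simp add: algebra_simps)
  also have "\<dots> \<le> (1 + x0) ^ Suc k * r ^ Suc k"
    using r power_increasing[of 1 "Suc k" "1 + x0"] by (intro mult_right_mono) auto
  also have "\<dots> = ((1 + x0) * r) ^ Suc k"
    by (simp add: power_mult_distrib)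
  finally have "ln (1 + y) \<le> ln (((1 + x0) * r) ^ Suc k)"
    using \<open>0 < y\<close> by simp
  also have "\<dots> = Suc k * ln ((1 + x0) * r)"
    by (rule ln_realpow)
  finally show "ln (1 + y) \<le> Suc k * ln ((1 + x0) * r)" .
qed

(* With r = 1/q, block_weight r alpha beta k is, up to a constant factor, the size of
   y^alpha (log y)^beta on the k-th block (x0 r^(k-1), x0 r^k]. *)
definition block_weight :: "real \<Rightarrow> real \<Rightarrow> real \<Rightarrow> real \<Rightarrow> real" where
  "block_weight r \<alpha> \<beta> t = r powr (\<alpha> * t) * t powr \<beta>"

lemma powr_ln_le_block_weight:
  fixes r x0 \<alpha> \<beta> :: real
  assumes r: "1 < r" "r \<le> x0"
  obtains M where "0 \<le> M"
    "\<And>k y. x0 * r ^ k < y \<Longrightarrow> y \<le> x0 * r ^ Suc k \<Longrightarrow>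
       y powr \<alpha> * ln (1 + y) powr \<beta> \<le> M * block_weight r \<alpha> \<beta> (Suc k)"
proof
  define L where "L = ln ((1 + x0) * r)"
  define c where "c = L / ln r"
  have "1 < (1 + x0) * r"
    using r mult_strict_mono[of 1 "1 + x0" 1 r] by simp
  then have "0 < ln r" "0 < L"
    using r by (simp_all add: L_def)
  show "0 \<le> r powr \<bar>\<alpha>\<bar> * x0 powr \<alpha> * c powr \<bar>\<beta>\<bar> * L powr \<beta>"
    by simp
  fix k y
  assume y: "x0 * r ^ k < y" "y \<le> x0 * r ^ Suc k"
  have "0 < x0 * r ^ k"
    using r by simp
  then have "0 < y"
    using y by linarith
  have "y powr \<alpha> \<le> r powr \<bar>\<alpha>\<bar> * (x0 * r ^ Suc k) powr \<alpha>"
    using \<open>0 < y\<close> y r by (intro powr_le_powr_abs_mult) auto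
  also have "\<dots> = r powr \<bar>\<alpha>\<bar> * x0 powr \<alpha> * r powr (\<alpha> * Suc k)"
    using r by (simp add: powr_mult powr_powr powr_add mult.commute distrib_left flip: powr_realpow)
  finally have y_le: "y powr \<alpha> \<le> r powr \<bar>\<alpha>\<bar> * x0 powr \<alpha> * r powr (\<alpha> * Suc k)" .
  have ln_y: "Suc k * ln r \<le> ln (1 + y)" "ln (1 + y) \<le> Suc k * L"
    using ln_one_plus_block_bounds[OF r y] by (simp_all add: L_def)
  have "Suc k * L = c * (Suc k * ln r)"
    using \<open>0 < ln r\<close> by (simp add: c_def)
  also have "\<dots> \<le> c * ln (1 + y)"
    using ln_y(1) \<open>0 < ln r\<close> \<open>0 < L\<close> by (intro mult_left_mono) (simp_all add: c_def)
  finally have "ln (1 + y) powr \<beta> \<le> c powr \<bar>\<beta>\<bar> * (Suc k * L) powr \<beta>"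
    using \<open>0 < y\<close> ln_y by (intro powr_le_powr_abs_mult) auto
  also have "\<dots> = c powr \<bar>\<beta>\<bar> * L powr \<beta> * Suc k powr \<beta>"
    by (simp add: powr_mult)
  finally have "y powr \<alpha> * ln (1 + y) powr \<beta> \<le>
      (r powr \<bar>\<alpha>\<bar> * x0 powr \<alpha> * r powr (\<alpha> * Suc k)) * (c powr \<bar>\<beta>\<bar> * L powr \<beta> * Suc k powr \<beta>)"
    using y_le by (intro mult_mono) auto
  then show "y powr \<alpha> * ln (1 + y) powr \<beta> \<le>
      r powr \<bar>\<alpha>\<bar> * x0 powr \<alpha> * c powr \<bar>\<beta>\<bar> * L powr \<beta> * block_weight r \<alpha> \<beta> (Suc k)"
    by (simp add: block_weight_def ac_simps)
qed

lemma le_mult_power_ceiling_log: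
  fixes r x x0 :: real
  assumes "1 < r" "0 < x0" "0 < x"
  shows "x \<le> x0 * r ^ nat \<lceil>log r (x / x0)\<rceil>"
proof -
  have "x / x0 = r powr log r (x / x0)"
    using assms by simp
  also have "\<dots> \<le> r powr nat \<lceil>log r (x / x0)\<rceil>"
    using assms by (intro powr_mono) linarith+
  also have "\<dots> = r ^ nat \<lceil>log r (x / x0)\<rceil>"
    using assms by (simp add: powr_realpow)
  finally show ?thesis
    using assms by (simp add: field_simps)
qed

lemma telescoping_eventually_bounds_sum:
  fixes b d :: "nat \<Rightarrow> real"
  assumes "eventually (\<lambda>n. b (Suc n) \<le> d (Suc n) - d n) sequentially"
  obtains c where "\<And>n. (\<Sum>k=1..n. b k) \<le> d n + c"
proof -
  obtain N where N: "\<And>n. N \<le> n \<Longrightarrow> b (Suc n) \<le> d (Suc n) - d n"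
    using assms by (auto simp: eventually_sequentially)
  define c where "c = Max ((\<lambda>n. (\<Sum>k=1..n. b k) - d n) ` {..N})"
  have initial: "(\<Sum>k=1..n. b k) \<le> d n + c" if "n \<le> N" for n
  proof -
    have "(\<Sum>k=1..n. b k) - d n \<le> c"
      unfolding c_def using that by (intro Max_ge) auto
    then show ?thesis
      by simp
  qed
  have tail: "(\<Sum>k=1..n. b k) \<le> d n + c" if "N \<le> n" for n
    using that
  proof (induction n rule: dec_induct)
    case base
    then show ?case
      using initial by simp
  next
    case (step n)
    then show ?case
      using N[of n] by simp
  qed
  have "(\<Sum>k=1..n. b k) \<le> d n + c" for n
    using initial tail by (cases "n \<le> N") auto
  then show thesis
    by (rule that)
qed

lemma sum_le_from_diff_ratio_tendsto:
  fixes b d :: "real \<Rightarrow> real"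
  assumes lim: "((\<lambda>x. (d (x + 1) - d x) / b (x + 1)) \<longlongrightarrow> l) at_top" and "0 < l"
    and b: "\<And>x. 0 < x \<Longrightarrow> 0 < b x"
  obtains K c where "0 \<le> K" "\<And>n. (\<Sum>k=1..n. b (real k)) \<le> K * d (real n) + c"
proof -
  have "eventually (\<lambda>x. l / 2 < (d (x + 1) - d x) / b (x + 1)) at_top"
    using lim \<open>0 < l\<close> by (intro order_tendstoD) auto
  then have "eventually (\<lambda>x. b (x + 1) \<le> 2 / l * d (x + 1) - 2 / l * d x) at_top"
    using eventually_gt_at_top[of 0]
  proof eventually_elim
    case (elim x)
    then have "l / 2 * b (x + 1) < d (x + 1) - d x"
      using b[of "x + 1"] by (simp add: field_simps)
    then show ?case
      using \<open>0 < l\<close> by (simp add: field_simps)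
  qed
  then have "eventually (\<lambda>n. b (real (Suc n)) \<le> 2 / l * d (real (Suc n)) - 2 / l * d (real n)) sequentially"
    by (rule eventually_compose_filterlim[OF _ filterlim_real_sequentially, THEN eventually_mono])
      (simp add: add.commute)
  then obtain c where "\<And>n. (\<Sum>k=1..n. b (real k)) \<le> 2 / l * d (real n) + c"
    using telescoping_eventually_bounds_sum[of "\<lambda>k. b (real k)" "\<lambda>n. 2 / l * d (real n)"] by blast
  then show thesis
    using \<open>0 < l\<close> by (intro that[of "2 / l"]) auto
qed

lemma bigo_of_le_affine:
  fixes F S \<Phi> :: "real \<Rightarrow> real"
  assumes "eventually (\<lambda>x. 0 \<le> F x \<and> F x \<le> B + A * S x) at_top"
    and "S \<in> O(\<Phi>)" "(\<lambda>_. 1) \<in> O(\<Phi>)"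
  shows "F \<in> O(\<Phi>)"
proof -
  have "(\<lambda>_. B) \<in> O(\<Phi>)"
    using bigo_const assms(3) by (rule landau_o.big_trans)
  moreover have "(\<lambda>x. A * S x) \<in> O(\<Phi>)"
    using assms(2) by (cases "A = 0") auto
  ultimately have "(\<lambda>x. B + A * S x) \<in> O(\<Phi>)"
    by (rule sum_in_bigo(1))
  moreover have "F \<in> O(\<lambda>x. B + A * S x)"
    using assms(1) by (intro landau_o.big_mono) (auto elim!: eventually_mono)
  ultimately show ?thesis
    using landau_o.big_trans by blast
qed

lemma ceiling_sum_bigo:
  fixes b d E \<Phi> u :: "real \<Rightarrow> real"
  assumes lim: "((\<lambda>x. (d (x + 1) - d x) / b (x + 1)) \<longlongrightarrow> l) at_top" and "0 < l"
    and b: "\<And>x. 0 < x \<Longrightarrow> 0 < b x"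
    and dE: "\<And>t n. 0 < t \<Longrightarrow> t \<le> real n \<Longrightarrow> real n \<le> t + 1 \<Longrightarrow> d (real n) \<le> E t"
      \<comment> \<open>E absorbs the rounding of u x up to the integer nat \<lceil>u x\<rceil>\<close>
    and u: "filterlim u at_top at_top"
    and E: "(\<lambda>x. E (u x)) \<in> O(\<Phi>)" and one: "(\<lambda>_. 1) \<in> O(\<Phi>)"
  shows "(\<lambda>x. \<Sum>k=1..nat \<lceil>u x\<rceil>. b (real k)) \<in> O(\<Phi>)"
proof -
  obtain K c where K: "0 \<le> K" and sum: "\<And>n. (\<Sum>k=1..n. b (real k)) \<le> K * d (real n) + c"
    using sum_le_from_diff_ratio_tendsto[OF lim \<open>0 < l\<close> b] by blast
  have "eventually (\<lambda>x. 0 < u x) at_top"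
    using u by (simp add: filterlim_at_top_dense)
  then have "eventually (\<lambda>x. 0 \<le> (\<Sum>k=1..nat \<lceil>u x\<rceil>. b (real k))
      \<and> (\<Sum>k=1..nat \<lceil>u x\<rceil>. b (real k)) \<le> c + K * E (u x)) at_top"
  proof eventually_elim
    case (elim x)
    have "0 \<le> (\<Sum>k=1..nat \<lceil>u x\<rceil>. b (real k))"
      using b by (intro sum_nonneg) (simp add: less_imp_le)
    moreover have "d (nat \<lceil>u x\<rceil>) \<le> E (u x)"
      using elim by (intro dE) linarith+
    then have "K * d (nat \<lceil>u x\<rceil>) \<le> K * E (u x)"
      using K by (rule mult_left_mono)
    ultimately show ?case
      using sum[of "nat \<lceil>u x\<rceil>"] by linarith
  qed
  then show ?thesis
    using E one by (rule bigo_of_le_affine)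
qed

lemma powr_le_add_powr_endpoints:
  fixes s t \<beta> :: real
  assumes "0 < t" "t \<le> s" "s \<le> t + 1"
  shows "s powr \<beta> \<le> t powr \<beta> + (t + 1) powr \<beta>"
proof (cases "0 \<le> \<beta>")
  case True
  then have "s powr \<beta> \<le> (t + 1) powr \<beta>"
    using assms by (intro powr_mono2) auto
  then show ?thesis
    by (simp add: add_increasing)
next
  case False
  then have "s powr \<beta> \<le> t powr \<beta>"
    using assms by (intro powr_mono2') auto
  then show ?thesis
    by (simp add: add_increasing2)
qed

lemma block_weight_pos: "0 < r \<Longrightarrow> 0 < x \<Longrightarrow> 0 < block_weight r \<alpha> \<beta> x"
  by (simp add: block_weight_def)

lemma block_weight_diff_ratio_tendsto:
  fixes r \<alpha> \<beta> :: real
  assumes "0 < r"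
  shows "((\<lambda>x. (block_weight r \<alpha> \<beta> (x + 1) - block_weight r \<alpha> \<beta> x) / block_weight r \<alpha> \<beta> (x + 1))
    \<longlongrightarrow> 1 - r powr -\<alpha>) at_top"
proof (rule Lim_transform_eventually)
  show "((\<lambda>x. 1 - r powr -\<alpha> * (x / (x + 1)) powr \<beta>) \<longlongrightarrow> 1 - r powr -\<alpha>) at_top"
    by real_asymp
  show "eventually (\<lambda>x. 1 - r powr -\<alpha> * (x / (x + 1)) powr \<beta>
      = (block_weight r \<alpha> \<beta> (x + 1) - block_weight r \<alpha> \<beta> x) / block_weight r \<alpha> \<beta> (x + 1)) at_top"
    using eventually_gt_at_top[of 0]
  proof eventually_elim
    case (elim x)
    have "r powr -\<alpha> = r powr (\<alpha> * x) / r powr (\<alpha> * (x + 1))"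
      by (simp add: algebra_simps flip: powr_diff)
    then have "r powr -\<alpha> * (x / (x + 1)) powr \<beta>
        = r powr (\<alpha> * x) / r powr (\<alpha> * (x + 1)) * (x powr \<beta> / (x + 1) powr \<beta>)"
      by (simp only: powr_divide)
    also have "\<dots> = block_weight r \<alpha> \<beta> x / block_weight r \<alpha> \<beta> (x + 1)"
      by (simp add: block_weight_def)
    finally show ?case
      using block_weight_pos[OF assms, of "x + 1" \<alpha> \<beta>] elim by (simp add: diff_divide_distrib)
  qed
qed

lemma block_sum_bigo_exponential:
  fixes r x0 \<alpha> \<beta> :: real
  assumes r: "1 < r" and x0: "0 < x0" and \<alpha>: "0 < \<alpha>"
  shows "(\<lambda>x. \<Sum>k=1..nat \<lceil>log r (x / x0)\<rceil>. block_weight r \<alpha> \<beta> k)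
    \<in> O(\<lambda>x. x powr \<alpha> * ln (1 + x) powr \<beta>)"
proof (rule ceiling_sum_bigo[where d = "block_weight r \<alpha> \<beta>" and l = "1 - r powr -\<alpha>"
      and E = "\<lambda>t. r powr (\<alpha> * (t + 1)) * (t powr \<beta> + (t + 1) powr \<beta>)"])
  show "((\<lambda>x. (block_weight r \<alpha> \<beta> (x + 1) - block_weight r \<alpha> \<beta> x) / block_weight r \<alpha> \<beta> (x + 1))
      \<longlongrightarrow> 1 - r powr -\<alpha>) at_top"
    using r by (intro block_weight_diff_ratio_tendsto) simp
  show "0 < 1 - r powr -\<alpha>"
    using r \<alpha> powr_less_one[of r "-\<alpha>"] by simp
  show "0 < block_weight r \<alpha> \<beta> x" if "0 < x" for x
    using r that by (simp add: block_weight_pos)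
  show "block_weight r \<alpha> \<beta> n \<le> r powr (\<alpha> * (t + 1)) * (t powr \<beta> + (t + 1) powr \<beta>)"
    if t: "0 < t" "t \<le> real n" "real n \<le> t + 1" for t n
  proof -
    have "r powr (\<alpha> * n) \<le> r powr (\<alpha> * (t + 1))"
      using r \<alpha> t by (intro powr_mono) auto
    then show ?thesis
      unfolding block_weight_def using powr_le_add_powr_endpoints[OF t] by (intro mult_mono) auto
  qed
  show "filterlim (\<lambda>x. log r (x / x0)) at_top at_top"
    using r x0 by real_asymp
  show "(\<lambda>x. r powr (\<alpha> * (log r (x / x0) + 1)) * (log r (x / x0) powr \<beta> + (log r (x / x0) + 1) powr \<beta>))
      \<in> O(\<lambda>x. x powr \<alpha> * ln (1 + x) powr \<beta>)"
    using r x0 \<alpha> by real_asymp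
  show "(\<lambda>_. 1) \<in> O(\<lambda>x. x powr \<alpha> * ln (1 + x) powr \<beta>)"
    using \<alpha> by real_asymp
qed

lemma block_sum_bounded_exponential:
  fixes r x0 \<alpha> \<beta> :: real
  assumes r: "1 < r" and x0: "0 < x0" and \<alpha>: "\<alpha> < 0"
  shows "(\<lambda>x. \<Sum>k=1..nat \<lceil>log r (x / x0)\<rceil>. block_weight r \<alpha> \<beta> k) \<in> O(\<lambda>_. 1)"
proof (rule ceiling_sum_bigo[where d = "\<lambda>t. - block_weight r \<alpha> \<beta> t" and l = "r powr -\<alpha> - 1"
      and E = "\<lambda>_. 0"])
  have "((\<lambda>x. - ((block_weight r \<alpha> \<beta> (x + 1) - block_weight r \<alpha> \<beta> x) / block_weight r \<alpha> \<beta> (x + 1)))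
      \<longlongrightarrow> - (1 - r powr -\<alpha>)) at_top"
    using r by (intro tendsto_minus block_weight_diff_ratio_tendsto) simp
  then show "((\<lambda>x. (- block_weight r \<alpha> \<beta> (x + 1) - - block_weight r \<alpha> \<beta> x) / block_weight r \<alpha> \<beta> (x + 1))
      \<longlongrightarrow> r powr -\<alpha> - 1) at_top"
    by (simp add: minus_divide_left)
  show "0 < r powr -\<alpha> - 1"
    using r \<alpha> powr_less_mono[of 0 "-\<alpha>" r] by simp
  show "0 < block_weight r \<alpha> \<beta> x" if "0 < x" for x
    using r that by (simp add: block_weight_pos)
  show "- block_weight r \<alpha> \<beta> n \<le> 0" for n :: nat
    using r by (simp add: block_weight_def)
  show "filterlim (\<lambda>x. log r (x / x0)) at_top at_top"
    using r x0 by real_asymp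
qed simp_all

lemma sum_powr_bigo_polylog:
  fixes r x0 \<beta> :: real
  assumes r: "1 < r" and x0: "0 < x0" and \<beta>: "-1 < \<beta>"
  shows "(\<lambda>x. \<Sum>k=1..nat \<lceil>log r (x / x0)\<rceil>. real k powr \<beta>) \<in> O(\<lambda>x. ln (1 + x) powr (\<beta> + 1))"
proof (rule ceiling_sum_bigo[where d = "\<lambda>t. t powr (\<beta> + 1)" and l = "\<beta> + 1"
      and E = "\<lambda>t. (t + 1) powr (\<beta> + 1)"])
  show "((\<lambda>x. ((x + 1) powr (\<beta> + 1) - x powr (\<beta> + 1)) / (x + 1) powr \<beta>) \<longlongrightarrow> \<beta> + 1) at_top"
    using \<beta> by real_asymp
  show "real n powr (\<beta> + 1) \<le> (t + 1) powr (\<beta> + 1)" if "0 < t" "t \<le> real n" "real n \<le> t + 1" for t n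
    using that \<beta> by (intro powr_mono2) auto
  show "filterlim (\<lambda>x. log r (x / x0)) at_top at_top"
    using r x0 by real_asymp
  show "(\<lambda>x. (log r (x / x0) + 1) powr (\<beta> + 1)) \<in> O(\<lambda>x. ln (1 + x) powr (\<beta> + 1))"
    using r x0 \<beta> by real_asymp
  show "(\<lambda>_. 1) \<in> O(\<lambda>x. ln (1 + x) powr (\<beta> + 1))"
    using \<beta> by real_asymp
qed (use \<beta> in simp_all)

lemma sum_inverse_bigo_loglog:
  fixes r x0 :: real
  assumes r: "1 < r" and x0: "0 < x0"
  shows "(\<lambda>x. \<Sum>k=1..nat \<lceil>log r (x / x0)\<rceil>. real k powr -1) \<in> O(\<lambda>x. ln (1 + ln (1 + x)))"
proof (rule ceiling_sum_bigo[where d = ln and l = 1 and E = "\<lambda>t. ln (t + 1)"])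
  show "((\<lambda>x::real. (ln (x + 1) - ln x) / (x + 1) powr -1) \<longlongrightarrow> 1) at_top"
    by real_asymp
  show "filterlim (\<lambda>x. log r (x / x0)) at_top at_top"
    using r x0 by real_asymp
  show "(\<lambda>x. ln (log r (x / x0) + 1)) \<in> O(\<lambda>x. ln (1 + ln (1 + x)))"
    using r x0 by real_asymp
  show "(\<lambda>_. 1) \<in> O(\<lambda>x::real. ln (1 + ln (1 + x)))"
    by real_asymp
qed simp_all

lemma sum_powr_bounded_polylog:
  fixes r x0 \<beta> :: real
  assumes r: "1 < r" and x0: "0 < x0" and \<beta>: "\<beta> < -1"
  shows "(\<lambda>x. \<Sum>k=1..nat \<lceil>log r (x / x0)\<rceil>. real k powr \<beta>) \<in> O(\<lambda>_. 1)"
proof (rule ceiling_sum_bigo[where d = "\<lambda>t. - (t powr (\<beta> + 1))" and l = "- (\<beta> + 1)" and E = "\<lambda>_. 0"])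
  show "((\<lambda>x. (- ((x + 1) powr (\<beta> + 1)) - - (x powr (\<beta> + 1))) / (x + 1) powr \<beta>) \<longlongrightarrow> - (\<beta> + 1)) at_top"
    using \<beta> by real_asymp
  show "filterlim (\<lambda>x. log r (x / x0)) at_top at_top"
    using r x0 by real_asymp
qed (use \<beta> in simp_all)

definition growth :: "real \<Rightarrow> real \<Rightarrow> real \<Rightarrow> real" where
  "growth \<alpha> \<beta> x =
     (if \<alpha> > 0 then x powr \<alpha> * logp x powr \<beta>
      else if \<alpha> = 0 \<and> \<beta> > -1 then logp x powr (\<beta> + 1)
      else if \<alpha> = 0 \<and> \<beta> = -1 then logp (logp x)
      else 1)"

lemma growth_cases:
  fixes \<alpha> \<beta> :: real
  obtains
    (exponential) "0 < \<alpha>" "growth \<alpha> \<beta> = (\<lambda>x. x powr \<alpha> * ln (1 + x) powr \<beta>)"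
  | (polylog) "\<alpha> = 0" "-1 < \<beta>" "growth \<alpha> \<beta> = (\<lambda>x. ln (1 + x) powr (\<beta> + 1))"
  | (loglog) "\<alpha> = 0" "\<beta> = -1" "growth \<alpha> \<beta> = (\<lambda>x. ln (1 + ln (1 + x)))"
  | (bounded_polylog) "\<alpha> = 0" "\<beta> < -1" "growth \<alpha> \<beta> = (\<lambda>_. 1)"
  | (bounded_exponential) "\<alpha> < 0" "growth \<alpha> \<beta> = (\<lambda>_. 1)"
  unfolding growth_def logp_def by (metis linorder_neqE_linordered_idom)

lemma const_bigo_growth: "(\<lambda>_. 1) \<in> O(growth \<alpha> \<beta>)"
proof (cases rule: growth_cases[of \<alpha> \<beta>])
  case exponential
  then show ?thesis
    unfolding exponential(2) by real_asymp
next
  case polylog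
  then show ?thesis
    unfolding polylog(3) by real_asymp
next
  case loglog
  then show ?thesis
    unfolding loglog(3) by real_asymp
qed simp_all

lemma block_sum_bigo_growth:
  fixes r x0 \<alpha> \<beta> :: real
  assumes r: "1 < r" and x0: "0 < x0"
  shows "(\<lambda>x. \<Sum>k=1..nat \<lceil>log r (x / x0)\<rceil>. block_weight r \<alpha> \<beta> k) \<in> O(growth \<alpha> \<beta>)"
proof (cases rule: growth_cases[of \<alpha> \<beta>])
  case exponential
  then show ?thesis
    using block_sum_bigo_exponential[OF r x0] by simp
next
  case polylog
  then show ?thesis
    using sum_powr_bigo_polylog[OF r x0] r by (simp add: block_weight_def)
next
  case loglog
  then show ?thesis
    using sum_inverse_bigo_loglog[OF r x0] r by (simp add: block_weight_def)
next
  case bounded_polylog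
  then show ?thesis
    using sum_powr_bounded_polylog[OF r x0] r by (simp add: block_weight_def)
next
  case bounded_exponential
  then show ?thesis
    using block_sum_bounded_exponential[OF r x0] by simp
qed

lemma bigo_powr_ln_le_block_weight:
  fixes G :: "real \<Rightarrow> real" and r \<alpha> \<beta> :: real
  assumes r: "1 < r" and G: "G \<in> O[at_top](\<lambda>y. y powr \<alpha> * ln (1 + y) powr \<beta>)"
  obtains x0 A where "r \<le> x0" "0 \<le> A"
    "\<And>k y. x0 * r ^ k < y \<Longrightarrow> y \<le> x0 * r ^ Suc k \<Longrightarrow> G y \<le> A * block_weight r \<alpha> \<beta> (Suc k)"
proof -
  obtain C where "0 < C" and "eventually (\<lambda>y. norm (G y) \<le> C * norm (y powr \<alpha> * ln (1 + y) powr \<beta>)) at_top"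
    using G by (elim landau_o.bigE)
  then obtain x1 where x1: "\<And>y. x1 \<le> y \<Longrightarrow> \<bar>G y\<bar> \<le> C * (y powr \<alpha> * ln (1 + y) powr \<beta>)"
    by (auto simp: eventually_at_top_linorder)
  define x0 where "x0 = max x1 r"
  have x0: "r \<le> x0" "x1 \<le> x0"
    by (auto simp: x0_def)
  obtain M where M: "0 \<le> M" "\<And>k y. x0 * r ^ k < y \<Longrightarrow> y \<le> x0 * r ^ Suc k \<Longrightarrow>
      y powr \<alpha> * ln (1 + y) powr \<beta> \<le> M * block_weight r \<alpha> \<beta> (Suc k)"
    using powr_ln_le_block_weight[OF r x0(1)] by blast
  have "G y \<le> C * M * block_weight r \<alpha> \<beta> (Suc k)" if y: "x0 * r ^ k < y" "y \<le> x0 * r ^ Suc k" for k y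
  proof -
    have "x0 \<le> x0 * r ^ k"
      using r x0 by simp
    then have "\<bar>G y\<bar> \<le> C * (y powr \<alpha> * ln (1 + y) powr \<beta>)"
      using x0 y by (intro x1) linarith
    also have "\<dots> \<le> C * (M * block_weight r \<alpha> \<beta> (Suc k))"
      using M(2)[OF y] \<open>0 < C\<close> by (intro mult_left_mono) auto
    finally show ?thesis
      by (simp add: mult.assoc)
  qed
  moreover have "0 \<le> C * M"
    using \<open>0 < C\<close> M(1) by simp
  ultimately show thesis
    using x0(1) that by blast
qed

lemma max_recurrence_block_sum_bound:
  fixes F G :: "real \<Rightarrow> real" and p q r \<alpha> \<beta> :: real
  assumes rec: "\<And>y. 0 \<le> y \<Longrightarrow> F y \<le> max (F (p * y)) (F (q * y)) + G y"
    and pq: "0 \<le> p" "p \<le> q" "q * r \<le> 1" and r: "1 < r"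
    and F: "continuous_on {0..} F"
    and G: "G \<in> O[at_top](\<lambda>y. y powr \<alpha> * ln (1 + y) powr \<beta>)"
  obtains x0 B A where "0 < x0"
    "\<And>x. x0 < x \<Longrightarrow> F x \<le> B + A * (\<Sum>k=1..nat \<lceil>log r (x / x0)\<rceil>. block_weight r \<alpha> \<beta> k)"
proof (rule bigo_powr_ln_le_block_weight[OF r G])
  fix x0 A
  assume x0: "r \<le> x0" and "0 \<le> A"
    and block: "\<And>k y. x0 * r ^ k < y \<Longrightarrow> y \<le> x0 * r ^ Suc k \<Longrightarrow> G y \<le> A * block_weight r \<alpha> \<beta> (Suc k)"
  have "0 < x0"
    using r x0 by simp
  have "continuous_on {0..x0} F"
    using F by (rule continuous_on_subset) auto
  then obtain B where B: "\<And>y. y \<in> {0..x0} \<Longrightarrow> norm (F y) \<le> B"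
    using continuous_on_compact_bound[OF compact_Icc] by blast
  have bound: "F y \<le> B + (\<Sum>k=1..n. A * block_weight r \<alpha> \<beta> (real k))"
    if "0 \<le> y" "y \<le> x0 * r ^ n" for y and n :: nat
  proof (rule max_recurrence_le_block_sum[where a = "\<lambda>k. A * block_weight r \<alpha> \<beta> k",
        OF rec pq _ _ _ block _ that])
    show "0 \<le> r" "0 \<le> x0"
      using r \<open>0 < x0\<close> by auto
    show "F y \<le> B" if "0 \<le> y" "y \<le> x0" for y
      using B that by force
    show "0 \<le> A * block_weight r \<alpha> \<beta> k" for k
      using \<open>0 \<le> A\<close> r by (simp add: block_weight_def)
  qed
  have "F x \<le> B + A * (\<Sum>k=1..nat \<lceil>log r (x / x0)\<rceil>. block_weight r \<alpha> \<beta> k)" if "x0 < x" for x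
  proof -
    have "F x \<le> B + (\<Sum>k=1..nat \<lceil>log r (x / x0)\<rceil>. A * block_weight r \<alpha> \<beta> k)"
      using that \<open>0 < x0\<close> by (intro bound le_mult_power_ceiling_log[OF r \<open>0 < x0\<close>]) auto
    then show ?thesis
      by (simp add: sum_distrib_left)
  qed
  with \<open>0 < x0\<close> show thesis
    by (rule that)
qed

lemma max_recurrence_bigo_growth:
  fixes F G :: "real \<Rightarrow> real" and p q \<alpha> \<beta> :: real
  assumes rec: "\<And>y. 0 \<le> y \<Longrightarrow> F y \<le> max (F (p * y)) (F (q * y)) + G y"
    and pq: "0 \<le> p" "p \<le> q" "0 < q" "q < 1"
    and F: "\<And>y. 0 \<le> F y" "continuous_on {0..} F"
    and G: "G \<in> O[at_top](\<lambda>y. y powr \<alpha> * ln (1 + y) powr \<beta>)"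
  shows "F \<in> O(growth \<alpha> \<beta>)"
proof -
  have r: "q * (1 / q) \<le> 1" "1 < 1 / q"
    using pq by (simp_all add: field_simps)
  show ?thesis
  proof (rule max_recurrence_block_sum_bound[OF rec pq(1,2) r F(2) G])
    fix x0 B A
    assume "0 < x0" and bound: "\<And>x. x0 < x \<Longrightarrow>
      F x \<le> B + A * (\<Sum>k=1..nat \<lceil>log (1 / q) (x / x0)\<rceil>. block_weight (1 / q) \<alpha> \<beta> k)"
    have "eventually (\<lambda>x. 0 \<le> F x \<and>
        F x \<le> B + A * (\<Sum>k=1..nat \<lceil>log (1 / q) (x / x0)\<rceil>. block_weight (1 / q) \<alpha> \<beta> k)) at_top"
      using eventually_gt_at_top[of x0] by eventually_elim (rule conjI[OF F(1) bound])
    then show ?thesis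
      by (rule bigo_of_le_affine[OF _ block_sum_bigo_growth[OF r(2) \<open>0 < x0\<close>] const_bigo_growth])
  qed
qed

theorem mainTheorem9:
  fixes p q \<alpha> \<beta> :: real and f g :: "complex \<Rightarrow> complex"
  assumes hp: "0 < p" and hq: "q = 1 - p" and hpq: "p \<le> q"
    and hf: "f holomorphic_on UNIV" and hg: "g holomorphic_on UNIV"
    and feq: "\<And>z. f z = (1 - exp (- (of_real p * z))) * f (of_real p * z)
                      + exp (- (of_real p * z)) * f (of_real q * z) + g z"
    and f0: "f 0 = 0" and g0: "g 0 = 0"
    and gO: "(\<lambda>x::real. g (of_real x)) \<in> O[at_top](\<lambda>x. x powr \<alpha> * logp x powr \<beta>)"
  shows "(\<alpha> > 0 \<longrightarrow> (\<lambda>x::real. f (of_real x)) \<in> O[at_top](\<lambda>x. x powr \<alpha> * logp x powr \<beta>))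
       \<and> (\<alpha> = 0 \<and> \<beta> > -1 \<longrightarrow> (\<lambda>x::real. f (of_real x)) \<in> O[at_top](\<lambda>x. logp x powr (\<beta> + 1)))
       \<and> (\<alpha> = 0 \<and> \<beta> = -1 \<longrightarrow> (\<lambda>x::real. f (of_real x)) \<in> O[at_top](\<lambda>x. logp (logp x)))
       \<and> (\<alpha> = 0 \<and> \<beta> < -1 \<longrightarrow> (\<lambda>x::real. f (of_real x)) \<in> O[at_top](\<lambda>x. 1))
       \<and> (\<alpha> < 0 \<longrightarrow> (\<lambda>x::real. f (of_real x)) \<in> O[at_top](\<lambda>x. 1))"
proof -
  have rec: "norm (f (of_real y))
      \<le> max (norm (f (of_real (p * y)))) (norm (f (of_real (q * y)))) + norm (g (of_real y))"
    if "0 \<le> y" for y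
    using hp that by (intro norm_le_max_dilations_add[OF feq]) auto
  have cont: "continuous_on {0..} (\<lambda>y. norm (f (of_real y)))"
    by (intro continuous_on_norm continuous_on_compose2[OF holomorphic_on_imp_continuous_on[OF hf]])
      (auto intro: continuous_intros)
  have "(\<lambda>y. norm (g (of_real y))) \<in> O(\<lambda>y. norm (of_real (y powr \<alpha> * logp y powr \<beta>) :: complex))"
    using gO by (simp only: landau_o.big.norm_iff)
  then have "(\<lambda>y. norm (g (of_real y))) \<in> O(\<lambda>y. y powr \<alpha> * ln (1 + y) powr \<beta>)"
    by (simp only: norm_of_real landau_o.big.abs logp_def)
  then have "(\<lambda>x. norm (f (of_real x))) \<in> O(growth \<alpha> \<beta>)"
    using hp hq hpq by (intro max_recurrence_bigo_growth[OF rec _ _ _ _ _ cont]) auto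
  then have "(\<lambda>x. norm (f (of_real x))) \<in> O(\<lambda>x. norm (of_real (growth \<alpha> \<beta> x) :: complex))"
    by (simp only: norm_of_real landau_o.big.abs)
  then have "(\<lambda>x. f (of_real x)) \<in> O(\<lambda>x. of_real (growth \<alpha> \<beta> x))"
    by (simp only: landau_o.big.norm_iff)
  then show ?thesis
    by (auto simp: growth_def)
qed

end
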